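(* Let $m=2k+1$ with $k$ a nonnegative integer. For $h\in(0,+\infty)$ let $u=u(h)$, $J_{i,j}=J_{i,j}(h)$ and $I_{i,j}=I_{i,j}(h)$ be as in the context. Then: (i) For all integers $i,l,s\ge 0$: $J_{i,2s}=-I_{i,2s}$, $J_{2l,2s+1}=I_{2l,2s+1}$, $J_{2l+1,2s+1}=-I_{2l+1,2s+1}$. (ii) For every integer $l\ge 1$ there are constants $\tau^{i}_{l,d}$, $\mu^{i}_{l,d}$ such that for $0\le d\le l$ $$J_{2l-2d,2d}=\tau_{l,d}^{0}h^{l}J_{0,0}+\sum_{i=1}^{d}\tau_{l,d}^{i}h^{i-1}u^{2l+2d(m-1)+1-2m(i-1)}+\sum_{i=1}^{l-d}\tau_{l,d}^{i+d}h^{l-i}u^{2m+1+2(i-1)},$$ and for $0\le d\le l-1$ $$J_{2l-2d-1,2d+1}=\mu_{l,d}^{0}h^{l-1}J_{1,1}+\sum_{i=1}^{d}\mu_{l,d}^{i}h^{i-1}u^{2l+2d(m-1)+m-2m(i-1)}+\sum_{i=2}^{l-d}\mu_{l,d}^{i+d}h^{l-i}u^{3m+2+2(i-2)}.$$ (iii) For every integer $l\ge 0$ there are constants $\chi_{l,d}$ such that for $0\le d\le l$: $J_{2l+1-2d,2d}=0$ and $J_{2l-2d,2d+1}=\chi_{l,d}h^{l}J_{0,1}$.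
   Context: For $h>0$ let $u=u(h)>0$ be the unique positive number with $u^2+u^{2m}=h$; the circle $x^2+y^2=h$ meets the curve $y=x^m$ at $A=(-u,(-u)^m)$ and $B=(u,u^m)$. $L_h^{+}$ is the arc of this circle in $\{y\ge x^m\}$ traversed clockwise from $A$ to $B$, and $L_h^-$ the arc in $\{y\le x^m\}$ traversed clockwise from $B$ to $A$. For nonnegative integers $i,j$, $J_{i,j}(h)=\int_{L_h^+}x^iy^jdx$ and $I_{i,j}(h)=\int_{L_h^-}x^iy^jdx$. The constants $\tau,\mu,\chi$ depend only on the indices (and $m$), not on $h$. *)

theory Defs
  imports "HOL-Analysis.Analysis"
begin

definition uh :: "nat \<Rightarrow> real \<Rightarrow> real" where
  "uh m h = (THE u. u > 0 \<and> u ^ 2 + u ^ (2 * m) = h)"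

text \<open>Polar angles of B = (u, u^m) and A = (-u, (-u)^m) on the circle x^2+y^2=h.\<close>
definition thetaB :: "nat \<Rightarrow> real \<Rightarrow> real" where
  "thetaB m h = arctan (uh m h ^ m / uh m h)"

definition thetaA :: "nat \<Rightarrow> real \<Rightarrow> real" where
  "thetaA m h = pi + arctan ((- uh m h) ^ m / (- uh m h))"

text \<open>L_h^+ : arc through the top point (0, sqrt h), clockwise from A to B
  (angle decreasing from thetaA to thetaB), parametrised on [0,1].\<close>
definition Lplus :: "nat \<Rightarrow> real \<Rightarrow> real \<Rightarrow> real \<times> real" where
  "Lplus m h t = (let \<phi> = thetaA m h + t * (thetaB m h - thetaA m h)
                 in (sqrt h * cos \<phi>, sqrt h * sin \<phi>))"

text \<open>L_h^- : arc through the bottom point (0, -sqrt h), clockwise from B to A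
  (angle decreasing from thetaB to thetaA - 2 pi), parametrised on [0,1].\<close>
definition Lminus :: "nat \<Rightarrow> real \<Rightarrow> real \<Rightarrow> real \<times> real" where
  "Lminus m h t = (let \<phi> = thetaB m h + t * ((thetaA m h - 2 * pi) - thetaB m h)
                  in (sqrt h * cos \<phi>, sqrt h * sin \<phi>))"

definition line_integral_dx :: "(real \<times> real \<Rightarrow> real) \<Rightarrow> (real \<Rightarrow> real \<times> real) \<Rightarrow> real" where
  "line_integral_dx f g =
     integral {0..1} (\<lambda>t. f (g t) * vector_derivative (\<lambda>s. fst (g s)) (at t))"

definition Jint :: "nat \<Rightarrow> nat \<Rightarrow> nat \<Rightarrow> real \<Rightarrow> real" where
  "Jint m i j h = line_integral_dx (\<lambda>(x, y). x ^ i * y ^ j) (Lplus m h)"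

definition Iint :: "nat \<Rightarrow> nat \<Rightarrow> nat \<Rightarrow> real \<Rightarrow> real" where
  "Iint m i j h = line_integral_dx (\<lambda>(x, y). x ^ i * y ^ j) (Lminus m h)"

end

theory Submission
  imports Defs
begin

text \<open>
  Let theta be the polar angle of B. Since m is odd, A = -B, so L_h^+ is the half turn of
  angle theta + pi - t pi and L_h^- is its reflection through the origin; this relates J and I.
  On the circle the forms x^i y^(2b) dx = x^i (h - x^2)^b dx and
  x^(2a+1) y^(2b+1) dx = - y^(2b+2) (h - y^2)^a dy are exact with polynomial primitives, so
  these integrals are polynomials in h, u and u^m, and they vanish when the primitive is even.
  The remaining integrals J_(2a,2b+1) are h^(a+b+1) times the integral of the pi-periodic
  function cos^(2a) sin^(2b+2) over a half turn, which does not depend on theta. Finally, with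
  v = u^2 and w = u^(2m), the relation v + w = h reduces every monomial v^alpha w^beta h^gamma
  of fixed degree to the generators on the right-hand sides of (ii).
\<close>

lemma
  assumes "m > 0" and "h > 0"
  shows uh_pos: "uh m h > 0" and uh_sum_powers: "uh m h ^ 2 + uh m h ^ (2 * m) = h"
proof -
  let ?f = "\<lambda>x::real. x ^ 2 + x ^ (2 * m)"
  have "strict_mono_on {0..} ?f"
    using assms(1) by (intro strict_mono_onI add_strict_mono power_strict_mono) auto
  then have inj: "inj_on ?f {0..}"
    by (rule strict_mono_on_imp_inj_on)
  have "\<exists>x. 0 \<le> x \<and> x \<le> 1 + h \<and> ?f x = h"
  proof (rule IVT')
    have "h \<le> (1 + h) ^ 2"
      using assms(2) by (simp add: power2_eq_square algebra_simps)
    then show "h \<le> ?f (1 + h)"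
      using assms(2) by (simp add: add_increasing2)
  qed (use assms in \<open>auto intro!: continuous_intros simp: power_0_left\<close>)
  then obtain x where x: "x \<ge> 0" "?f x = h"
    by blast
  then have "x > 0"
    using assms by (cases "x = 0") (auto simp: power_0_left)
  moreover have "y = x" if "y > 0" "?f y = h" for y
    using inj_onD[OF inj, of y x] that x by simp
  ultimately have "\<exists>!x. x > 0 \<and> ?f x = h"
    using x by blast
  then have "uh m h > 0 \<and> ?f (uh m h) = h"
    unfolding uh_def by (rule theI')
  then show "uh m h > 0" "uh m h ^ 2 + uh m h ^ (2 * m) = h"
    by auto
qed

lemma polar_arctan:
  fixes x y :: real
  assumes "x > 0"
  shows "sqrt (x\<^sup>2 + y\<^sup>2) * cos (arctan (y / x)) = x"
    and "sqrt (x\<^sup>2 + y\<^sup>2) * sin (arctan (y / x)) = y"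
proof -
  have "x\<^sup>2 + y\<^sup>2 = x\<^sup>2 * (1 + (y / x)\<^sup>2)"
    using assms by (simp add: field_simps)
  then have "sqrt (x\<^sup>2 + y\<^sup>2) = x * sqrt (1 + (y / x)\<^sup>2)"
    using assms by (simp add: real_sqrt_mult)
  moreover have "sqrt (1 + (y / x)\<^sup>2) > 0"
    by (simp add: add_pos_nonneg)
  ultimately show "sqrt (x\<^sup>2 + y\<^sup>2) * cos (arctan (y / x)) = x"
    and "sqrt (x\<^sup>2 + y\<^sup>2) * sin (arctan (y / x)) = y"
    using assms by (simp_all add: cos_arctan sin_arctan)
qed

lemma antiderivative_periodic_increment:
  fixes G g :: "real \<Rightarrow> real"
  assumes "\<And>x. (G has_real_derivative g x) (at x)" and "\<And>x. g (x + p) = g x"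
  shows "G (x + p) - G x = G p - G 0"
proof -
  have "((\<lambda>x. G (x + p) - G x) has_real_derivative g (x + p) - g x) (at x)" for x
    using DERIV_chain2[OF assms(1) DERIV_add[OF DERIV_ident DERIV_const]] assms(1)
    by (auto intro!: derivative_intros)
  then show ?thesis
    using DERIV_isconst_all[of "\<lambda>x. G (x + p) - G x" x 0] assms(2) by simp
qed

lemma real_antiderivative_exists:
  fixes g :: "real \<Rightarrow> real"
  assumes "\<And>x. isCont g x"
  obtains G where "\<And>x. (G has_real_derivative g x) (at x)"
  using einterval_antiderivative[of "-\<infinity>" "\<infinity>" g] assms
  by (auto simp: has_real_derivative_iff_has_vector_derivative)

lemma line_integral_dx_fundamental:
  assumes "\<And>t. ((\<lambda>s. fst (g s)) has_real_derivative x' t) (at t)"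
    and "\<And>t. (\<Phi> has_real_derivative f (g t) * x' t) (at t)"
  shows "line_integral_dx f g = \<Phi> 1 - \<Phi> 0"
proof -
  have "vector_derivative (\<lambda>s. fst (g s)) (at t) = x' t" for t
    using assms(1) by (intro vector_derivative_at) (simp add: has_real_derivative_iff_has_vector_derivative)
  then have "line_integral_dx f g = integral {0..1} (\<lambda>t. f (g t) * x' t)"
    by (simp add: line_integral_dx_def)
  also have "\<dots> = \<Phi> 1 - \<Phi> 0"
    using assms(2)
    by (intro integral_unique fundamental_theorem_of_calculus)
       (auto simp flip: has_real_derivative_iff_has_vector_derivative intro: has_field_derivative_at_within)
  finally show ?thesis .
qed

lemma line_integral_dx_uminus_path:
  assumes "\<And>t. ((\<lambda>s. fst (g s)) has_real_derivative x' t) (at t)"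
  shows "line_integral_dx f (\<lambda>t. - g t) = - line_integral_dx (\<lambda>p. f (- p)) g"
proof -
  have "vector_derivative (\<lambda>s. fst (g s)) (at t) = x' t"
    and "vector_derivative (\<lambda>s. fst (- g s)) (at t) = - x' t" for t
    using assms[of t] DERIV_minus[OF assms[of t]]
    by (auto intro!: vector_derivative_at simp: has_real_derivative_iff_has_vector_derivative)
  then show ?thesis
    by (simp add: line_integral_dx_def flip: integral_neg)
qed

definition circle_arc :: "real \<Rightarrow> real \<Rightarrow> real \<Rightarrow> real \<times> real" where
  "circle_arc r \<phi> t = (r * cos (\<phi> - t * pi), r * sin (\<phi> - t * pi))"

lemma circle_arc_add_pi: "circle_arc r (\<phi> + pi) t = - circle_arc r \<phi> t"
  using cos_periodic_pi[of "\<phi> - t * pi"] sin_periodic_pi[of "\<phi> - t * pi"]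
  by (simp add: circle_arc_def algebra_simps)

lemma circle_arc_on_circle: "fst (circle_arc r \<phi> t) ^ 2 + snd (circle_arc r \<phi> t) ^ 2 = r ^ 2"
proof -
  have "(r * cos x)\<^sup>2 + (r * sin x)\<^sup>2 = r\<^sup>2" for x
    by (simp add: power_mult_distrib flip: distrib_left)
  then show ?thesis
    by (simp add: circle_arc_def)
qed

lemma has_real_derivative_circle_arc:
  shows has_real_derivative_circle_arc_fst:
      "((\<lambda>s. fst (circle_arc r \<phi> s)) has_real_derivative pi * snd (circle_arc r \<phi> t)) (at t)"
    and has_real_derivative_circle_arc_snd:
      "((\<lambda>s. snd (circle_arc r \<phi> s)) has_real_derivative - pi * fst (circle_arc r \<phi> t)) (at t)"
  unfolding circle_arc_def by (auto intro!: derivative_eq_intros)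

lemma thetaA_eq:
  assumes "odd m"
  shows "thetaA m h = thetaB m h + pi"
  using assms by (simp add: thetaA_def thetaB_def power_minus_odd)

lemma Lplus_eq_arc: "odd m \<Longrightarrow> Lplus m h = circle_arc (sqrt h) (thetaB m h + pi)"
  by (rule ext) (simp add: Lplus_def circle_arc_def thetaA_eq Let_def algebra_simps)

lemma Lminus_eq_arc: "odd m \<Longrightarrow> Lminus m h = circle_arc (sqrt h) (thetaB m h)"
  by (rule ext) (simp add: Lminus_def circle_arc_def thetaA_eq Let_def algebra_simps)

lemma
  assumes "odd m"
  shows has_real_derivative_Lplus_fst:
      "((\<lambda>s. fst (Lplus m h s)) has_real_derivative pi * snd (Lplus m h t)) (at t)"
    and has_real_derivative_Lplus_snd:
      "((\<lambda>s. snd (Lplus m h s)) has_real_derivative - pi * fst (Lplus m h t)) (at t)"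
  unfolding Lplus_eq_arc[OF assms] by (fact has_real_derivative_circle_arc)+

lemma Lplus_on_circle:
  assumes "odd m" and "h > 0"
  shows "fst (Lplus m h t) ^ 2 + snd (Lplus m h t) ^ 2 = h"
  using circle_arc_on_circle[of "sqrt h"] assms by (simp add: Lplus_eq_arc)

lemma
  assumes "odd m" and "h > 0"
  shows Lplus_start: "Lplus m h 0 = (- uh m h, - (uh m h ^ m))"
    and Lplus_end: "Lplus m h 1 = (uh m h, uh m h ^ m)"
proof -
  have m: "m > 0"
    using assms(1) by (rule odd_pos)
  have "h = (uh m h)\<^sup>2 + (uh m h ^ m)\<^sup>2"
    using uh_sum_powers[OF m assms(2)] by (simp add: power_mult mult.commute)
  then have "sqrt h * cos (thetaB m h) = uh m h" and "sqrt h * sin (thetaB m h) = uh m h ^ m"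
    using polar_arctan[OF uh_pos[OF m assms(2)], of "uh m h ^ m"] by (simp_all add: thetaB_def)
  then show "Lplus m h 0 = (- uh m h, - (uh m h ^ m))" and "Lplus m h 1 = (uh m h, uh m h ^ m)"
    by (simp_all add: Lplus_eq_arc[OF assms(1)] circle_arc_def)
qed

definition circle_primitive :: "nat \<Rightarrow> nat \<Rightarrow> real \<Rightarrow> real \<Rightarrow> real" where
  "circle_primitive i b h x =
     (\<Sum>k\<le>b. real (b choose k) * (-1) ^ k * h ^ (b - k) * (x ^ (i + 2 * k + 1) / real (i + 2 * k + 1)))"

lemma circle_primitive_deriv:
  "(circle_primitive i b h has_real_derivative x ^ i * (h - x\<^sup>2) ^ b) (at x)"
proof -
  have monomial: "((\<lambda>x. x ^ (n + 1) / real (n + 1)) has_real_derivative x ^ n) (at x)" for n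
    using DERIV_cdivide[OF DERIV_pow[of "n + 1" x], of "real (n + 1)"] by simp
  have deriv: "(circle_primitive i b h has_real_derivative
          (\<Sum>k\<le>b. real (b choose k) * (-1) ^ k * h ^ (b - k) * x ^ (i + 2 * k))) (at x)"
    unfolding circle_primitive_def [abs_def] by (rule DERIV_sum) (rule DERIV_cmult[OF monomial])
  have "(h - x\<^sup>2) ^ b = (\<Sum>k\<le>b. real (b choose k) * (- x\<^sup>2) ^ k * h ^ (b - k))"
    unfolding binomial_ring [symmetric] by simp
  then have "x ^ i * (h - x\<^sup>2) ^ b = (\<Sum>k\<le>b. real (b choose k) * (-1) ^ k * h ^ (b - k) * x ^ (i + 2 * k))"
    unfolding power_add power_mult by (simp add: sum_distrib_left power_minus' mult_ac)
  with deriv show ?thesis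
    by simp
qed

lemma circle_primitive_uminus: "circle_primitive i b h (- x) = (-1) ^ (i + 1) * circle_primitive i b h x"
  unfolding circle_primitive_def sum_distrib_left
  by (rule sum.cong) (simp_all add: power_minus' power_add power_mult)

lemma Jint_eq_Iint:
  assumes "odd m"
  shows "Jint m i j h = (-1) ^ (i + j + 1) * Iint m i j h"
proof -
  have "Jint m i j h = line_integral_dx (\<lambda>(x, y). x ^ i * y ^ j) (\<lambda>t. - circle_arc (sqrt h) (thetaB m h) t)"
    unfolding Jint_def Lplus_eq_arc[OF assms] circle_arc_add_pi ..
  also have "\<dots> = - line_integral_dx (\<lambda>p. (-1) ^ (i + j) * (case p of (x, y) \<Rightarrow> x ^ i * y ^ j)) (circle_arc (sqrt h) (thetaB m h))"
    by (subst line_integral_dx_uminus_path[OF has_real_derivative_circle_arc_fst])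
       (simp add: case_prod_unfold power_minus' power_add mult_ac)
  also have "\<dots> = (-1) ^ (i + j + 1) * Iint m i j h"
    by (simp add: Iint_def Lminus_eq_arc[OF assms] line_integral_dx_def case_prod_unfold mult.assoc)
  finally show ?thesis .
qed

lemma Jint_even_power:
  assumes "odd m" and "h > 0"
  shows "Jint m i (2 * b) h = circle_primitive i b h (uh m h) - circle_primitive i b h (- uh m h)"
proof -
  let ?x = "\<lambda>t. fst (Lplus m h t)" and ?y = "\<lambda>t. snd (Lplus m h t)"
  have "Jint m i (2 * b) h = circle_primitive i b h (?x 1) - circle_primitive i b h (?x 0)"
    unfolding Jint_def
  proof (rule line_integral_dx_fundamental[OF has_real_derivative_Lplus_fst[OF assms(1)]])
    fix t
    have "?y t ^ 2 = h - ?x t ^ 2"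
      using Lplus_on_circle[OF assms, of t] by simp
    then show "((\<lambda>t. circle_primitive i b h (?x t)) has_real_derivative
        (case Lplus m h t of (x, y) \<Rightarrow> x ^ i * y ^ (2 * b)) * (pi * ?y t)) (at t)"
      using DERIV_chain2[OF circle_primitive_deriv has_real_derivative_Lplus_fst[OF assms(1)]]
      by (simp add: case_prod_unfold power_mult)
  qed
  then show ?thesis
    by (simp add: Lplus_start[OF assms] Lplus_end[OF assms])
qed

lemma Jint_odd_even:
  assumes "odd m" and "h > 0" and "odd i"
  shows "Jint m i (2 * b) h = 0"
  using Jint_even_power[OF assms(1,2)] assms(3) by (simp add: circle_primitive_uminus)

lemma Jint_even_even:
  assumes "odd m" and "h > 0"
  shows "Jint m (2 * a) (2 * b) h = 2 * circle_primitive (2 * a) b h (uh m h)"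
  using Jint_even_power[OF assms] by (simp add: circle_primitive_uminus)

lemma Jint_odd_odd:
  assumes "odd m" and "h > 0"
  shows "Jint m (2 * a + 1) (2 * b + 1) h = - 2 * circle_primitive (2 * b + 2) a h (uh m h ^ m)"
proof -
  let ?x = "\<lambda>t. fst (Lplus m h t)" and ?y = "\<lambda>t. snd (Lplus m h t)"
  let ?P = "circle_primitive (2 * b + 2) a h"
  have "Jint m (2 * a + 1) (2 * b + 1) h = - ?P (?y 1) - - ?P (?y 0)"
    unfolding Jint_def
  proof (rule line_integral_dx_fundamental[OF has_real_derivative_Lplus_fst[OF assms(1)]])
    fix t
    have "h - ?y t ^ 2 = ?x t ^ 2"
      using Lplus_on_circle[OF assms, of t] by simp
    then have "(h - ?y t ^ 2) ^ a = ?x t ^ (2 * a)"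
      by (simp add: power_mult)
    then have integrand: "- (?y t ^ (2 * b + 2) * (h - ?y t ^ 2) ^ a * (- pi * ?x t)) =
        (case Lplus m h t of (x, y) \<Rightarrow> x ^ (2 * a + 1) * y ^ (2 * b + 1)) * (pi * ?y t)"
      by (simp add: case_prod_unfold power_add mult_ac)
    have "((\<lambda>t. - ?P (?y t)) has_real_derivative
        - (?y t ^ (2 * b + 2) * (h - ?y t ^ 2) ^ a * (- pi * ?x t))) (at t)"
      by (rule DERIV_minus[OF DERIV_chain2[OF circle_primitive_deriv has_real_derivative_Lplus_snd[OF assms(1)]]])
    then show "((\<lambda>t. - ?P (?y t)) has_real_derivative
        (case Lplus m h t of (x, y) \<Rightarrow> x ^ (2 * a + 1) * y ^ (2 * b + 1)) * (pi * ?y t)) (at t)"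
      unfolding integrand .
  qed
  then show ?thesis
    by (simp add: Lplus_start[OF assms] Lplus_end[OF assms] circle_primitive_uminus)
qed

lemma Jint_even_odd:
  assumes "odd m" and "h > 0"
    and G: "\<And>x. (G has_real_derivative cos x ^ (2 * a) * sin x ^ (2 * b + 2)) (at x)"
  shows "Jint m (2 * a) (2 * b + 1) h = h ^ (a + b + 1) * (G pi - G 0)"
proof -
  define \<theta> where "\<theta> = thetaB m h"
  define r where "r = sqrt h"
  define \<Phi> where "\<Phi> t = - (r ^ (2 * a + 2 * b + 2)) * G (\<theta> + pi - t * pi)" for t
  have "Jint m (2 * a) (2 * b + 1) h = \<Phi> 1 - \<Phi> 0"
    unfolding Jint_def
  proof (rule line_integral_dx_fundamental[OF has_real_derivative_Lplus_fst[OF assms(1)]])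
    fix t
    let ?\<phi> = "\<theta> + pi - t * pi"
    have "((\<lambda>t. \<theta> + pi - t * pi) has_real_derivative - pi) (at t)"
      by (auto intro!: derivative_eq_intros)
    then have deriv: "(\<Phi> has_real_derivative
        - (r ^ (2 * a + 2 * b + 2)) * (cos ?\<phi> ^ (2 * a) * sin ?\<phi> ^ (2 * b + 2) * - pi)) (at t)"
      unfolding \<Phi>_def [abs_def] by (intro DERIV_cmult DERIV_chain2[OF G])
    have integrand: "- (r ^ (2 * a + 2 * b + 2)) * (cos ?\<phi> ^ (2 * a) * sin ?\<phi> ^ (2 * b + 2) * - pi) =
        (case Lplus m h t of (x, y) \<Rightarrow> x ^ (2 * a) * y ^ (2 * b + 1)) * (pi * snd (Lplus m h t))"
      unfolding Lplus_eq_arc[OF assms(1)] circle_arc_def \<theta>_def [symmetric] r_def [symmetric]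
      by (simp add: power_mult_distrib power_add mult_ac)
    show "(\<Phi> has_real_derivative
        (case Lplus m h t of (x, y) \<Rightarrow> x ^ (2 * a) * y ^ (2 * b + 1)) * (pi * snd (Lplus m h t))) (at t)"
      using deriv unfolding integrand .
  qed
  also have "\<dots> = r ^ (2 * (a + b + 1)) * (G (\<theta> + pi) - G \<theta>)"
    by (simp add: \<Phi>_def algebra_simps)
  also have "\<dots> = h ^ (a + b + 1) * (G pi - G 0)"
    using antiderivative_periodic_increment[OF G, of pi \<theta>] assms(2)
    unfolding power_mult r_def by simp
  finally show ?thesis .
qed

lemma Jint_0_0: "odd m \<Longrightarrow> h > 0 \<Longrightarrow> Jint m 0 0 h = 2 * uh m h"
  using Jint_even_even[of m h 0 0] by (simp add: circle_primitive_def)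

lemma Jint_1_1:
  assumes "odd m" and "h > 0"
  shows "Jint m 1 1 h = - 2 / 3 * uh m h ^ (3 * m)"
proof -
  have "uh m h ^ (3 * m) = (uh m h ^ m) ^ 3"
    by (simp add: mult.commute flip: power_mult)
  then show ?thesis
    using Jint_odd_odd[OF assms, of 0 0] by (simp add: circle_primitive_def power3_eq_cube)
qed

lemma Jint_0_1:
  assumes "odd m" and "h > 0"
  shows "Jint m 0 1 h = pi / 2 * h"
proof -
  have "((\<lambda>x. (x - sin x * cos x) / 2) has_real_derivative cos x ^ (2 * 0) * sin x ^ (2 * 0 + 2)) (at x)" for x
  proof -
    have "((\<lambda>x. (x - sin x * cos x) / 2) has_real_derivative (1 - (cos x * cos x - sin x * sin x)) / 2) (at x)"
      by (auto intro!: derivative_eq_intros)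
    moreover have "(1 - (cos x * cos x - sin x * sin x)) / 2 = cos x ^ (2 * 0) * sin x ^ (2 * 0 + 2)"
      using sin_cos_squared_add[of x] by (simp add: power2_eq_square)
    ultimately show ?thesis
      by simp
  qed
  from Jint_even_odd[OF assms this] show ?thesis
    by simp
qed

text \<open>
  A template E is the right-hand side of an expansion as a function of its coefficients c, which
  play the role of the h-independent constants tau and mu of the theorem.
\<close>

definition expressible :: "((nat \<Rightarrow> real) \<Rightarrow> real \<Rightarrow> real) \<Rightarrow> (real \<Rightarrow> real) \<Rightarrow> bool" where
  "expressible E f \<longleftrightarrow> (\<exists>c. \<forall>h>0. f h = E c h)"

definition linear_in_coeffs :: "((nat \<Rightarrow> real) \<Rightarrow> real \<Rightarrow> real) \<Rightarrow> bool" where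
  "linear_in_coeffs E \<longleftrightarrow> (\<forall>c c' a h. E (\<lambda>i. a * c i + c' i) h = a * E c h + E c' h)"

lemma linear_in_coeffsD:
  "linear_in_coeffs E \<Longrightarrow> E (\<lambda>i. a * c i + c' i) h = a * E c h + E c' h"
  unfolding linear_in_coeffs_def by blast

lemma expressibleI: "(\<And>h. h > 0 \<Longrightarrow> f h = E c h) \<Longrightarrow> expressible E f"
  unfolding expressible_def by blast

lemma expressible_cong: "(\<And>h. h > 0 \<Longrightarrow> f h = g h) \<Longrightarrow> expressible E g \<Longrightarrow> expressible E f"
  unfolding expressible_def by simp

lemma expressible_lincomb:
  assumes "linear_in_coeffs E" and "expressible E f" and "expressible E g"
  shows "expressible E (\<lambda>h. a * f h + g h)"
proof -
  obtain c c' where f: "\<forall>h>0. f h = E c h" and g: "\<forall>h>0. g h = E c' h"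
    using assms(2,3) unfolding expressible_def by blast
  show ?thesis
  proof (rule expressibleI)
    fix h :: real
    assume "h > 0"
    then have "a * f h + g h = a * E c h + E c' h"
      using f g by simp
    also have "\<dots> = E (\<lambda>i. a * c i + c' i) h"
      using linear_in_coeffsD[OF assms(1)] by simp
    finally show "a * f h + g h = E (\<lambda>i. a * c i + c' i) h" .
  qed
qed

lemma expressible_zero:
  assumes "linear_in_coeffs E"
  shows "expressible E (\<lambda>h. 0)"
proof (rule expressibleI)
  show "0 = E (\<lambda>i. 0) h" for h
    using linear_in_coeffsD[OF assms, of 1 "\<lambda>i. 0" "\<lambda>i. 0" h] by simp
qed

lemma expressible_scale: "linear_in_coeffs E \<Longrightarrow> expressible E f \<Longrightarrow> expressible E (\<lambda>h. a * f h)"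
  using expressible_lincomb[OF _ _ expressible_zero] by simp

lemma expressible_diff:
  "linear_in_coeffs E \<Longrightarrow> expressible E f \<Longrightarrow> expressible E g \<Longrightarrow> expressible E (\<lambda>h. f h - g h)"
  using expressible_lincomb[of E g f "-1"] by simp

lemma expressible_sum:
  assumes "linear_in_coeffs E" and "finite A" and "\<And>x. x \<in> A \<Longrightarrow> expressible E (f x)"
  shows "expressible E (\<lambda>h. \<Sum>x\<in>A. a x * f x h)"
  using assms(2,3)
proof (induction A rule: finite_induct)
  case empty
  then show ?case
    using expressible_zero[OF assms(1)] by simp
next
  case (insert x A)
  then show ?case
    using expressible_lincomb[OF assms(1), of "f x" _ "a x"] by simp
qed

text \<open>
  Every monomial of degree N in v, w and h = v + w is a combination of the generators
  v^j h^(N-j) (j < e) and v^e w^q h^(N-e-q): trade a factor v for h - w while the exponent of v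
  exceeds e, and a factor w for h - v while it is below e.
\<close>

lemma expressible_monomials:
  assumes E: "linear_in_coeffs E"
    and vw: "\<And>h. h > 0 \<Longrightarrow> v h + w h = h"
    and low: "\<And>j. j < e \<Longrightarrow> expressible E (\<lambda>h. c h * v h ^ j * h ^ (N - j))"
    and high: "\<And>q. e + q \<le> N \<Longrightarrow> expressible E (\<lambda>h. c h * v h ^ e * w h ^ q * h ^ (N - e - q))"
    and deg: "\<alpha> + \<beta> + \<gamma> = N"
  shows "expressible E (\<lambda>h. c h * v h ^ \<alpha> * w h ^ \<beta> * h ^ \<gamma>)"
proof -
  define M where "M \<alpha> \<beta> \<gamma> h = c h * v h ^ \<alpha> * w h ^ \<beta> * h ^ \<gamma>" for \<alpha> \<beta> \<gamma> h
  have step: "M \<alpha> \<beta> (Suc \<gamma>) h = M (Suc \<alpha>) \<beta> \<gamma> h + M \<alpha> (Suc \<beta>) \<gamma> h" if "h > 0" for \<alpha> \<beta> \<gamma> h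
  proof -
    have "h ^ Suc \<gamma> = (v h + w h) * h ^ \<gamma>"
      using vw[OF that] by simp
    then show ?thesis
      unfolding M_def by (simp only:) (simp add: algebra_simps)
  qed
  have upper: "expressible E (M \<alpha> \<beta> \<gamma>)" if "e \<le> \<alpha>" "\<alpha> + \<beta> + \<gamma> = N" for \<alpha> \<beta> \<gamma>
    using that
  proof (induction "\<alpha> - e" arbitrary: \<alpha> \<beta> \<gamma>)
    case 0
    then have "\<alpha> = e" and "\<gamma> = N - e - \<beta>"
      by simp_all
    then show ?case
      using high[of \<beta>] "0.prems" by (simp add: M_def [abs_def])
  next
    case (Suc n)
    then obtain \<alpha>' where \<alpha>: "\<alpha> = Suc \<alpha>'" and "n = \<alpha>' - e" and "e \<le> \<alpha>'"
      by (cases \<alpha>) auto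
    then have "expressible E (\<lambda>h. M \<alpha>' \<beta> (Suc \<gamma>) h - M \<alpha>' (Suc \<beta>) \<gamma> h)"
      using Suc by (intro expressible_diff[OF E] Suc.hyps) simp_all
    then show ?case
      unfolding \<alpha> by (rule expressible_cong[rotated]) (simp add: step)
  qed
  have lower: "expressible E (M \<alpha> \<beta> \<gamma>)" if "\<alpha> < e" "\<alpha> + \<beta> + \<gamma> = N" for \<alpha> \<beta> \<gamma>
    using that
  proof (induction \<beta> arbitrary: \<alpha> \<gamma>)
    case 0
    then show ?case
      using low[of \<alpha>] by (simp add: M_def [abs_def] flip: "0.prems"(2))
  next
    case (Suc \<beta>)
    have "expressible E (M \<alpha> \<beta> (Suc \<gamma>))"
      using Suc by simp
    moreover have "expressible E (M (Suc \<alpha>) \<beta> \<gamma>)"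
      using Suc upper[of "Suc \<alpha>" \<beta> \<gamma>] by (cases "Suc \<alpha> < e") simp_all
    ultimately have "expressible E (\<lambda>h. M \<alpha> \<beta> (Suc \<gamma>) h - M (Suc \<alpha>) \<beta> \<gamma> h)"
      by (rule expressible_diff[OF E])
    then show ?case
      by (rule expressible_cong[rotated]) (simp add: step)
  qed
  have "expressible E (M \<alpha> \<beta> \<gamma>)"
    using upper[OF _ deg] lower[OF _ deg] by (cases "\<alpha> < e") simp_all
  then show ?thesis
    by (simp add: M_def [abs_def])
qed

definition tau_expansion :: "nat \<Rightarrow> nat \<Rightarrow> nat \<Rightarrow> (nat \<Rightarrow> real) \<Rightarrow> real \<Rightarrow> real" where
  "tau_expansion m l d \<tau> h =
     \<tau> 0 * h ^ l * Jint m 0 0 h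
     + (\<Sum>i=1..d. \<tau> i * h ^ (i-1) * uh m h ^ (2 * l + 2 * d * (m-1) + 1 - 2 * m * (i-1)))
     + (\<Sum>i=1..l-d. \<tau> (i+d) * h ^ (l-i) * uh m h ^ (2 * m + 1 + 2 * (i-1)))"

definition mu_expansion :: "nat \<Rightarrow> nat \<Rightarrow> nat \<Rightarrow> (nat \<Rightarrow> real) \<Rightarrow> real \<Rightarrow> real" where
  "mu_expansion m l d \<mu> h =
     \<mu> 0 * h ^ (l-1) * Jint m 1 1 h
     + (\<Sum>i=1..d. \<mu> i * h ^ (i-1) * uh m h ^ (2 * l + 2 * d * (m-1) + m - 2 * m * (i-1)))
     + (\<Sum>i=2..l-d. \<mu> (i+d) * h ^ (l-i) * uh m h ^ (3 * m + 2 + 2 * (i-2)))"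

lemma linear_in_coeffs_tau_expansion: "linear_in_coeffs (tau_expansion m l d)"
  unfolding linear_in_coeffs_def tau_expansion_def by (simp add: sum.distrib sum_distrib_left algebra_simps)

lemma linear_in_coeffs_mu_expansion: "linear_in_coeffs (mu_expansion m l d)"
  unfolding linear_in_coeffs_def mu_expansion_def by (simp add: sum.distrib sum_distrib_left algebra_simps)

text \<open>
  With v = u^2 and w = u^(2m), the generators of tau_expansion are u h^l,
  u v^(i-1) w h^(l-i) for 1 \<le> i \<le> l - d, and u v^(l-d) w^q h^(d-q) for 1 \<le> q \<le> d.
\<close>

lemma expressible_tau_expansion_low:
  assumes "odd m" and "j \<le> l - d"
  shows "expressible (tau_expansion m l d) (\<lambda>h. uh m h * (uh m h ^ 2) ^ j * h ^ (l - j))"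
  using assms(2)
proof (induction j)
  case 0
  have "expressible (tau_expansion m l d) (\<lambda>h. h ^ l * Jint m 0 0 h)"
    by (rule expressibleI[of _ _ "\<lambda>n. of_bool (n = 0)"]) (simp add: tau_expansion_def)
  then have "expressible (tau_expansion m l d) (\<lambda>h. 1 / 2 * (h ^ l * Jint m 0 0 h))"
    by (rule expressible_scale[OF linear_in_coeffs_tau_expansion])
  then show ?case
    by (rule expressible_cong[rotated]) (simp add: Jint_0_0[OF assms(1)])
next
  case (Suc j)
  let ?u = "uh m"
  have "expressible (tau_expansion m l d) (\<lambda>h. h ^ (l - Suc j) * ?u h ^ (2 * m + 1 + 2 * (Suc j - 1)))"
    by (rule expressibleI[of _ _ "\<lambda>n. of_bool (n = Suc j + d)"])
       (use Suc.prems in \<open>simp add: tau_expansion_def mult.assoc\<close>)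
  with Suc have "expressible (tau_expansion m l d) (\<lambda>h. ?u h * (?u h ^ 2) ^ j * h ^ (l - j)
      - h ^ (l - Suc j) * ?u h ^ (2 * m + 1 + 2 * (Suc j - 1)))"
    by (intro expressible_diff[OF linear_in_coeffs_tau_expansion]) simp_all
  then show ?case
  proof (rule expressible_cong[rotated])
    fix h :: real
    assume "h > 0"
    have h_pow: "h ^ (l - j) = (?u h ^ 2 + ?u h ^ (2 * m)) * h ^ (l - Suc j)"
      using Suc.prems uh_sum_powers[OF odd_pos[OF assms(1)] \<open>h > 0\<close>]
      by (simp flip: power_Suc add: Suc_diff_Suc)
    have u_pow: "?u h ^ (2 * m + 1 + 2 * (Suc j - 1)) = ?u h * ?u h ^ (2 * m) * (?u h ^ 2) ^ j"
      by (simp add: power_add power_mult)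
    show "?u h * (?u h ^ 2) ^ Suc j * h ^ (l - Suc j) = ?u h * (?u h ^ 2) ^ j * h ^ (l - j)
        - h ^ (l - Suc j) * ?u h ^ (2 * m + 1 + 2 * (Suc j - 1))"
      unfolding h_pow u_pow by (simp add: algebra_simps)
  qed
qed

lemma expressible_tau_expansion_high:
  assumes "odd m" and "d \<le> l" and "q \<le> d"
  shows "expressible (tau_expansion m l d)
    (\<lambda>h. uh m h * (uh m h ^ 2) ^ (l - d) * (uh m h ^ (2 * m)) ^ q * h ^ (l - (l - d) - q))"
proof (cases "q = 0")
  case True
  then show ?thesis
    using expressible_tau_expansion_low[OF assms(1), of "l - d" l d] by simp
next
  case False
  obtain r where d: "d = q + r"
    using assms(3) le_Suc_ex by blast
  obtain s where l: "l = d + s"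
    using assms(2) le_Suc_ex by blast
  obtain m' where m': "m = Suc m'"
    using odd_pos[OF assms(1)] gr0_implies_Suc by blast
  have u_exp: "2 * l + 2 * d * (m-1) + 1 - 2 * m * (Suc r - 1) = 1 + 2 * (l - d) + 2 * m * q"
    by (simp add: d l m' algebra_simps)
  have h_exp: "l - (l - d) - q = Suc r - 1"
    using d l by simp
  have "expressible (tau_expansion m l d)
      (\<lambda>h. h ^ (Suc r - 1) * uh m h ^ (2 * l + 2 * d * (m-1) + 1 - 2 * m * (Suc r - 1)))"
    by (rule expressibleI[of _ _ "\<lambda>n. of_bool (n = Suc r)"])
       (use False d in \<open>simp add: tau_expansion_def mult.assoc\<close>)
  then show ?thesis
    by (rule expressible_cong[rotated])
       (simp only: u_exp h_exp power_add power_mult power_one_right, simp only: mult_ac)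
qed

lemma expressible_Jint_even_even:
  assumes "odd m" and "d \<le> l"
  shows "expressible (tau_expansion m l d) (\<lambda>h. Jint m (2 * l - 2 * d) (2 * d) h)"
proof -
  let ?u = "uh m"
  have "expressible (tau_expansion m l d) (\<lambda>h. \<Sum>k\<le>d.
      2 * real (d choose k) * (-1) ^ k / real (2 * (l - d) + 2 * k + 1)
      * (?u h * (?u h ^ 2) ^ (l - d + k) * (?u h ^ (2 * m)) ^ 0 * h ^ (d - k)))"
    using assms(2)
    by (intro expressible_sum[OF linear_in_coeffs_tau_expansion]
        expressible_monomials[OF linear_in_coeffs_tau_expansion uh_sum_powers[OF odd_pos[OF assms(1)]]
          expressible_tau_expansion_low[OF assms(1)] expressible_tau_expansion_high[OF assms]])
       auto
  then show ?thesis
  proof (rule expressible_cong[rotated])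
    fix h :: real
    assume "h > 0"
    have "2 * l - 2 * d = 2 * (l - d)"
      by simp
    then have "Jint m (2 * l - 2 * d) (2 * d) h = 2 * circle_primitive (2 * (l - d)) d h (?u h)"
      using Jint_even_even[OF assms(1) \<open>h > 0\<close>] by presburger
    then show "Jint m (2 * l - 2 * d) (2 * d) h = (\<Sum>k\<le>d.
        2 * real (d choose k) * (-1) ^ k / real (2 * (l - d) + 2 * k + 1)
        * (?u h * (?u h ^ 2) ^ (l - d + k) * (?u h ^ (2 * m)) ^ 0 * h ^ (d - k)))"
      by (simp add: circle_primitive_def sum_distrib_left power_add mult_ac flip: power_mult)
  qed
qed

text \<open>
  Likewise, the generators of mu_expansion are u^(3m) v^j h^(l-1-j) for j < l - d and
  u^(3m) v^(l-d) w^q h^(d-1-q) for q < d.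
\<close>

lemma expressible_mu_expansion_low:
  assumes "odd m" and "j < l - d"
  shows "expressible (mu_expansion m l d) (\<lambda>h. uh m h ^ (3 * m) * (uh m h ^ 2) ^ j * h ^ (l - 1 - j))"
proof (cases "j = 0")
  case True
  have "expressible (mu_expansion m l d) (\<lambda>h. h ^ (l - 1) * Jint m 1 1 h)"
    by (rule expressibleI[of _ _ "\<lambda>n. of_bool (n = 0)"]) (simp add: mu_expansion_def)
  then have "expressible (mu_expansion m l d) (\<lambda>h. - 3 / 2 * (h ^ (l - 1) * Jint m 1 1 h))"
    by (rule expressible_scale[OF linear_in_coeffs_mu_expansion])
  then show ?thesis
    by (rule expressible_cong[rotated]) (use True Jint_1_1[OF assms(1)] in simp)
next
  case False
  have u_exp: "3 * m + 2 + 2 * (Suc j - 2) = 3 * m + 2 * j"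
    using False by simp
  have "expressible (mu_expansion m l d) (\<lambda>h. h ^ (l - Suc j) * uh m h ^ (3 * m + 2 + 2 * (Suc j - 2)))"
    by (rule expressibleI[of _ _ "\<lambda>n. of_bool (n = Suc j + d)"])
       (use False assms(2) in \<open>simp add: mu_expansion_def mult.assoc\<close>)
  then show ?thesis
    by (rule expressible_cong[rotated]) (simp only: u_exp, simp add: power_add mult_ac flip: power_mult)
qed

lemma expressible_mu_expansion_high:
  assumes "odd m" and "d \<le> l" and "q < d"
  shows "expressible (mu_expansion m l d)
    (\<lambda>h. uh m h ^ (3 * m) * (uh m h ^ 2) ^ (l - d) * (uh m h ^ (2 * m)) ^ q * h ^ (l - 1 - (l - d) - q))"
proof -
  obtain r where d: "d = Suc (q + r)"
    using assms(3) less_iff_Suc_add by blast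
  obtain s where l: "l = d + s"
    using assms(2) le_Suc_ex by blast
  obtain m' where m': "m = Suc m'"
    using odd_pos[OF assms(1)] gr0_implies_Suc by blast
  have u_exp: "2 * l + 2 * d * (m-1) + m - 2 * m * (Suc r - 1) = 3 * m + 2 * (l - d) + 2 * m * q"
    by (simp add: d l m' algebra_simps)
  have h_exp: "l - 1 - (l - d) - q = Suc r - 1"
    using d l by simp
  have "expressible (mu_expansion m l d)
      (\<lambda>h. h ^ (Suc r - 1) * uh m h ^ (2 * l + 2 * d * (m-1) + m - 2 * m * (Suc r - 1)))"
    by (rule expressibleI[of _ _ "\<lambda>n. of_bool (n = Suc r)"])
       (use d in \<open>simp add: mu_expansion_def mult.assoc\<close>)
  then show ?thesis
    by (rule expressible_cong[rotated])
       (simp only: u_exp h_exp power_add power_mult power_one_right, simp only: mult_ac)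
qed

lemma expressible_Jint_odd_odd:
  assumes "odd m" and "d < l"
  shows "expressible (mu_expansion m l d) (\<lambda>h. Jint m (2 * l - 2 * d - 1) (2 * d + 1) h)"
proof -
  let ?u = "uh m"
  have "expressible (mu_expansion m l d) (\<lambda>h. \<Sum>k\<le>l - d - 1.
      - 2 * real (l - d - 1 choose k) * (-1) ^ k / real (2 * d + 2 + 2 * k + 1)
      * (?u h ^ (3 * m) * (?u h ^ 2) ^ 0 * (?u h ^ (2 * m)) ^ (d + k) * h ^ (l - d - 1 - k)))"
    using assms(2)
    by (intro expressible_sum[OF linear_in_coeffs_mu_expansion]
        expressible_monomials[OF linear_in_coeffs_mu_expansion uh_sum_powers[OF odd_pos[OF assms(1)]]
          expressible_mu_expansion_low[OF assms(1)] expressible_mu_expansion_high[OF assms(1)]])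
       auto
  then show ?thesis
  proof (rule expressible_cong[rotated])
    fix h :: real
    assume "h > 0"
    have "2 * l - 2 * d - 1 = 2 * (l - d - 1) + 1"
      using assms(2) by simp
    then have "Jint m (2 * l - 2 * d - 1) (2 * d + 1) h
        = - 2 * circle_primitive (2 * d + 2) (l - d - 1) h (?u h ^ m)"
      using Jint_odd_odd[OF assms(1) \<open>h > 0\<close>] by presburger
    also have "\<dots> = (\<Sum>k\<le>l - d - 1.
        - 2 * real (l - d - 1 choose k) * (-1) ^ k / real (2 * d + 2 + 2 * k + 1)
        * (?u h ^ (3 * m) * (?u h ^ 2) ^ 0 * (?u h ^ (2 * m)) ^ (d + k) * h ^ (l - d - 1 - k)))"
    proof -
      have "(x ^ m) ^ (2 * d + 2 + 2 * k + 1) = x ^ (3 * m) * (x ^ 2) ^ 0 * (x ^ (2 * m)) ^ (d + k)"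
        for x :: real and k
        by (simp add: algebra_simps flip: power_mult power_add)
      then show ?thesis
        unfolding circle_primitive_def sum_distrib_left
        by (intro sum.cong refl) (simp add: mult_ac)
    qed
    finally show "Jint m (2 * l - 2 * d - 1) (2 * d + 1) h = (\<Sum>k\<le>l - d - 1.
        - 2 * real (l - d - 1 choose k) * (-1) ^ k / real (2 * d + 2 + 2 * k + 1)
        * (?u h ^ (3 * m) * (?u h ^ 2) ^ 0 * (?u h ^ (2 * m)) ^ (d + k) * h ^ (l - d - 1 - k)))" .
  qed
qed

lemma Jint_Iint_symmetry:
  assumes "odd m" and "h > 0"
  shows "Jint m i (2 * s) h = - Iint m i (2 * s) h"
    and "Jint m (2 * l) (2 * s + 1) h = Iint m (2 * l) (2 * s + 1) h"
    and "Jint m (2 * l + 1) (2 * s + 1) h = - Iint m (2 * l + 1) (2 * s + 1) h"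
proof -
  show "Jint m i (2 * s) h = - Iint m i (2 * s) h"
    using Jint_eq_Iint[OF assms(1), of i "2 * s" h] Jint_odd_even[OF assms, of i s]
    by (cases "even i") auto
  show "Jint m (2 * l) (2 * s + 1) h = Iint m (2 * l) (2 * s + 1) h"
    and "Jint m (2 * l + 1) (2 * s + 1) h = - Iint m (2 * l + 1) (2 * s + 1) h"
    using Jint_eq_Iint[OF assms(1)] by simp_all
qed

lemma Jint_even_odd_proportional:
  assumes "odd m" and "d \<le> l"
  shows "\<exists>chi. \<forall>h>0. Jint m (2 * l - 2 * d) (2 * d + 1) h = chi * h ^ l * Jint m 0 1 h"
proof -
  have "isCont (\<lambda>x. cos x ^ (2 * (l - d)) * sin x ^ (2 * d + 2)) x" for x :: real
    by (intro continuous_intros isCont_cos isCont_sin)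
  then obtain G where G: "\<And>x. (G has_real_derivative cos x ^ (2 * (l - d)) * sin x ^ (2 * d + 2)) (at x)"
    using real_antiderivative_exists by blast
  have "Jint m (2 * l - 2 * d) (2 * d + 1) h = (G pi - G 0) / (pi / 2) * h ^ l * Jint m 0 1 h"
    if "h > 0" for h
  proof -
    have "Jint m (2 * l - 2 * d) (2 * d + 1) h = h ^ (l - d + d + 1) * (G pi - G 0)"
      using Jint_even_odd[OF assms(1) that G] by (simp add: diff_mult_distrib2)
    also have "\<dots> = (G pi - G 0) / (pi / 2) * h ^ l * (pi / 2 * h)"
      using assms(2) by simp
    finally show ?thesis
      by (simp only: Jint_0_1[OF assms(1) that])
  qed
  then show ?thesis
    by blast
qed

theorem lemma3p3:
  fixes k m :: nat
  assumes hm: "m = 2 * k + 1"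
  shows
   "(\<forall>i l s. \<forall>h>0.
        Jint m i (2 * s) h = - Iint m i (2 * s) h
      \<and> Jint m (2 * l) (2 * s+1) h = Iint m (2 * l) (2 * s+1) h
      \<and> Jint m (2 * l+1) (2 * s+1) h = - Iint m (2 * l+1) (2 * s+1) h)
  \<and> (\<forall>l\<ge>1. \<forall>d\<le>l. \<exists>\<tau>:: nat \<Rightarrow> real. \<forall>h>0.
        Jint m (2 * l-2 * d) (2 * d) h =
          \<tau> 0 * h ^ l * Jint m 0 0 h
          + (\<Sum>i=1..d. \<tau> i * h ^ (i-1) * uh m h ^ (2 * l + 2 * d * (m-1) + 1 - 2 * m * (i-1)))
          + (\<Sum>i=1..l-d. \<tau> (i+d) * h ^ (l-i) * uh m h ^ (2 * m + 1 + 2 * (i-1))))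
  \<and> (\<forall>l\<ge>1. \<forall>d\<le>l-1. \<exists>\<mu> :: nat \<Rightarrow> real. \<forall>h>0.
        Jint m (2 * l-2 * d-1) (2 * d+1) h =
          \<mu> 0 * h ^ (l-1) * Jint m 1 1 h
          + (\<Sum>i=1..d. \<mu> i * h ^ (i-1) * uh m h ^ (2 * l + 2 * d * (m-1) + m - 2 * m * (i-1)))
          + (\<Sum>i=2..l-d. \<mu> (i+d) * h ^ (l-i) * uh m h ^ (3 * m + 2 + 2 * (i-2))))
  \<and> (\<forall>l. \<forall>d\<le>l.
        (\<forall>h>0. Jint m (2 * l+1-2 * d) (2 * d) h = 0)
      \<and> (\<exists>chi :: real. \<forall>h>0. Jint m (2 * l-2 * d) (2 * d+1) h = chi * h ^ l * Jint m 0 1 h))"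
proof -
  have odd: "odd m"
    using hm by simp
  have "odd (2 * l + 1 - 2 * d)" if "d \<le> l" for l d :: nat
    using that by presburger
  then show ?thesis
    using Jint_Iint_symmetry[OF odd] Jint_odd_even[OF odd]
      expressible_Jint_even_even[OF odd] expressible_Jint_odd_odd[OF odd]
      Jint_even_odd_proportional[OF odd]
    unfolding expressible_def tau_expansion_def mu_expansion_def
    by (intro conjI allI impI) auto
qed

end
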